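(* Let $\rho_{AB}$ be a bipartite state on systems $A,B$ of equal finite dimension $d$, each with observable $L=\sum_{n=0}^{d-1}n|n\rangle\langle n|$. If $\mathrm{modes}(\rho_{AB})\neq\{0\}$ but $[1,d-1]\cap\mathrm{modes}(\rho_{AB})=\emptyset$ — equivalently $\rho_{AB}=\rho_{AB}^{(0)}+\sum_{i\ge d}\rho_{AB}^{(i)}$ with $\sum_{i\ge d}\rho_{AB}^{(i)}\neq0$ — then $\rho_{AB}$ is not a product state.
   Context: $L_{AB}=L\otimes\mathbb{I}+\mathbb{I}\otimes L=\sum_c c\,\Pi_c$ with $\Pi_c$ its eigenprojectors. The $j$th mode of a bipartite operator $X$ is $X^{(j)}:=\sum_c\Pi_{c+j}X\Pi_c$, and $\mathrm{modes}(X):=\{j\in\mathbb{N}:X^{(j)}\neq0\}$. *)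

theory Defs
  imports "Jordan_Normal_Form.Matrix" Complex_Main
begin

text \<open>Bipartite operators on C^d (x) C^d are (d*d) x (d*d) matrices, where the basis
vector |a> (x) |b> has index a*d+b (standard Kronecker ordering).\<close>

definition kron :: "complex mat \<Rightarrow> complex mat \<Rightarrow> complex mat" where
  "kron A B = mat (dim_row A * dim_row B) (dim_col A * dim_col B)
     (\<lambda>(i,j). A $$ (i div dim_row B, j div dim_col B) * B $$ (i mod dim_row B, j mod dim_col B))"

definition obsL :: "nat \<Rightarrow> complex mat" where
  "obsL d = mat d d (\<lambda>(i,j). if i = j then of_nat i else 0)"

definition LAB :: "nat \<Rightarrow> complex mat" where
  "LAB d = kron (obsL d) (1\<^sub>m d) + kron (1\<^sub>m d) (obsL d)"

text \<open>Eigenprojector Pi_c of L_AB for the value c (L_AB is diagonal in the product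
basis, so Pi_c is the diagonal 0/1 matrix selecting the basis vectors with L_AB-eigenvalue c;
it is the zero matrix if c is not an eigenvalue).\<close>
definition Proj :: "nat \<Rightarrow> nat \<Rightarrow> complex mat" where
  "Proj d c = mat (d*d) (d*d) (\<lambda>(i,j). if i = j \<and> LAB d $$ (i,i) = of_nat c then 1 else 0)"

text \<open>j-th mode X^(j) = sum_c Pi_(c+j) X Pi_c; the eigenvalues of L_AB are 0..2d-2,
so the sum ranges over c < 2d (entrywise sum of the matrices).\<close>
definition mode :: "nat \<Rightarrow> nat \<Rightarrow> complex mat \<Rightarrow> complex mat" where
  "mode d j X = mat (d*d) (d*d) (\<lambda>(i,k). \<Sum>c<2*d. (Proj d (c+j) * X * Proj d c) $$ (i,k))"

definition modes :: "nat \<Rightarrow> complex mat \<Rightarrow> nat set" where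
  "modes d X = {j. mode d j X \<noteq> 0\<^sub>m (d*d) (d*d)}"

definition is_state :: "nat \<Rightarrow> complex mat \<Rightarrow> bool" where
  "is_state n \<rho> \<longleftrightarrow> \<rho> \<in> carrier_mat n n
     \<and> (\<forall>i<n. \<forall>j<n. \<rho> $$ (j,i) = cnj (\<rho> $$ (i,j)))
     \<and> (\<forall>v :: complex vec. dim_vec v = n \<longrightarrow>
           0 \<le> Re (\<Sum>i<n. \<Sum>j<n. cnj (v $ i) * \<rho> $$ (i,j) * v $ j))
     \<and> (\<Sum>i<n. \<rho> $$ (i,i)) = 1"

definition is_product_state :: "nat \<Rightarrow> complex mat \<Rightarrow> bool" where
  "is_product_state d \<rho> \<longleftrightarrow> (\<exists>\<rho>A \<rho>B. is_state d \<rho>A \<and> is_state d \<rho>B \<and> \<rho> = kron \<rho>A \<rho>B)"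

end

theory Submission
  imports Defs
begin

text \<open>Write the basis vector with index \<open>a*d+b\<close> as \<open>|a,b>\<close>; it has \<open>L\<^sub>A\<^sub>B\<close>-eigenvalue \<open>a+b\<close>, so an
entry of \<open>X\<close> between \<open>|a',b'>\<close> and \<open>|a,b>\<close> lies in mode \<open>a+b-a'-b'\<close>.
Since the trace of a state is one, mode 0 is always present, so the hypotheses give a mode
\<open>j \<ge> d\<close> of \<open>\<rho> = \<rho>\<^sub>A \<otimes> \<rho>\<^sub>B\<close>, i.e. \<open>\<rho>\<^sub>A(a,a') \<rho>\<^sub>B(b,b') \<noteq> 0\<close> with \<open>a+b = a'+b'+j\<close>.
As all indices are below \<open>d\<close>, this forces \<open>a > a'\<close> and \<open>b > b'\<close>. Positivity of \<open>\<rho>\<^sub>B\<close> turns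
\<open>\<rho>\<^sub>B(b,b') \<noteq> 0\<close> into \<open>\<rho>\<^sub>B(b',b') \<noteq> 0\<close>, and then the entry \<open>\<rho>\<^sub>A(a,a') \<rho>\<^sub>B(b',b')\<close> of \<open>\<rho>\<close>
lies in the mode \<open>a-a' \<in> [1,d-1]\<close>, which was excluded.\<close>

definition LAB_value :: "nat \<Rightarrow> nat \<Rightarrow> nat" where
  "LAB_value d i = i div d + i mod d"

lemma index_kron:
  assumes "A \<in> carrier_mat n n" "B \<in> carrier_mat m m" "i < n*m" "k < n*m"
  shows "kron A B $$ (i,k) = A $$ (i div m, k div m) * B $$ (i mod m, k mod m)"
  using assms unfolding kron_def by auto

lemma div_mod_less_square:
  fixes i d :: nat
  assumes "i < d*d"
  shows "i div d < d" "i mod d < d"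
proof -
  have "0 < d"
    using assms by (cases d) auto
  then show "i div d < d" "i mod d < d"
    using assms by (auto simp: less_mult_imp_div_less)
qed

lemma index_LAB_diag:
  assumes "i < d*d"
  shows "LAB d $$ (i,i) = of_nat (LAB_value d i)"
  using assms div_mod_less_square[OF assms]
  by (simp add: LAB_def kron_def obsL_def LAB_value_def)

lemma LAB_value_less: "i < d*d \<Longrightarrow> LAB_value d i < 2*d"
  unfolding LAB_value_def using div_mod_less_square[of i d] by linarith

lemma index_mult_diag_left:
  fixes X :: "'a :: semiring_1 mat"
  assumes "X \<in> carrier_mat n m" "i < n" "k < m"
  shows "(mat n n (\<lambda>(i,j). if i = j \<and> P i then 1 else 0) * X) $$ (i,k) = (if P i then X $$ (i,k) else 0)"
proof -
  have "(mat n n (\<lambda>(i,j). if i = j \<and> P i then 1 else 0) * X) $$ (i,k)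
      = (\<Sum>l\<in>{0..<n}. (if i = l \<and> P i then 1 else 0) * X $$ (l,k))"
    using assms by (simp add: scalar_prod_def)
  also have "\<dots> = (\<Sum>l\<in>{0..<n}. if l = i then (if P i then X $$ (i,k) else 0) else 0)"
    by (intro sum.cong) auto
  also have "\<dots> = (if P i then X $$ (i,k) else 0)"
    using assms(2) by simp
  finally show ?thesis .
qed

lemma index_mult_diag_right:
  fixes X :: "'a :: semiring_1 mat"
  assumes "X \<in> carrier_mat n m" "i < n" "k < m"
  shows "(X * mat m m (\<lambda>(i,j). if i = j \<and> Q i then 1 else 0)) $$ (i,k) = (if Q k then X $$ (i,k) else 0)"
proof -
  have "(X * mat m m (\<lambda>(i,j). if i = j \<and> Q i then 1 else 0)) $$ (i,k)
      = (\<Sum>l\<in>{0..<m}. X $$ (i,l) * (if l = k \<and> Q l then 1 else 0))"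
    using assms by (simp add: scalar_prod_def)
  also have "\<dots> = (\<Sum>l\<in>{0..<m}. if l = k then (if Q k then X $$ (i,k) else 0) else 0)"
    by (intro sum.cong) auto
  also have "\<dots> = (if Q k then X $$ (i,k) else 0)"
    using assms(3) by simp
  finally show ?thesis .
qed

lemma index_mode:
  assumes "X \<in> carrier_mat (d*d) (d*d)" "i < d*d" "k < d*d"
  shows "mode d j X $$ (i,k) = (if LAB_value d i = LAB_value d k + j then X $$ (i,k) else 0)"
proof -
  have "(Proj d (c+j) * X * Proj d c) $$ (i,k)
      = (if c = LAB_value d k then (if LAB_value d i = c + j then X $$ (i,k) else 0) else 0)" for c
  proof -
    have "(Proj d (c+j) * X * Proj d c) $$ (i,k)
        = (if LAB d $$ (k,k) = of_nat c then (Proj d (c+j) * X) $$ (i,k) else 0)"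
      unfolding Proj_def[of d c] using assms by (intro index_mult_diag_right) (auto simp: Proj_def)
    also have "\<dots> = (if LAB d $$ (k,k) = of_nat c then
        (if LAB d $$ (i,i) = of_nat (c+j) then X $$ (i,k) else 0) else 0)"
      unfolding Proj_def[of d "c+j"] using assms by (simp only: index_mult_diag_left)
    finally show ?thesis
      using assms by (simp add: index_LAB_diag del: of_nat_add)
  qed
  then show ?thesis
    using assms LAB_value_less[of k d] by (simp add: mode_def)
qed

lemma mem_modes_iff:
  assumes "X \<in> carrier_mat (d*d) (d*d)"
  shows "j \<in> modes d X \<longleftrightarrow>
    (\<exists>i<d*d. \<exists>k<d*d. LAB_value d i = LAB_value d k + j \<and> X $$ (i,k) \<noteq> 0)"
proof -
  have "mode d j X \<in> carrier_mat (d*d) (d*d)"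
    unfolding mode_def by simp
  then have "mode d j X = 0\<^sub>m (d*d) (d*d) \<longleftrightarrow> (\<forall>i<d*d. \<forall>k<d*d. mode d j X $$ (i,k) = 0)"
    by auto
  then show ?thesis
    using assms by (auto simp: modes_def index_mode)
qed

lemma state_carrier_mat: "is_state n \<rho> \<Longrightarrow> \<rho> \<in> carrier_mat n n"
  unfolding is_state_def by blast

lemma state_zero_mem_modes:
  assumes "is_state (d*d) \<rho>"
  shows "0 \<in> modes d \<rho>"
proof -
  have "(\<Sum>i<d*d. \<rho> $$ (i,i)) = 1"
    using assms unfolding is_state_def by blast
  then obtain i where "i < d*d" "\<rho> $$ (i,i) \<noteq> 0"
    using sum.neutral[of "{..<d*d}" "\<lambda>i. \<rho> $$ (i,i)"] by fastforce
  then show ?thesis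
    using state_carrier_mat[OF assms] by (auto simp: mem_modes_iff)
qed

lemma quadratic_form_two_support:
  fixes \<rho> :: "complex mat" and v :: "complex vec"
  assumes "i < n" "j < n" "i \<noteq> j" "\<And>l. l < n \<Longrightarrow> l \<noteq> i \<Longrightarrow> l \<noteq> j \<Longrightarrow> v $ l = 0"
  shows "(\<Sum>k<n. \<Sum>l<n. cnj (v $ k) * \<rho> $$ (k,l) * v $ l)
    = (\<Sum>k\<in>{i,j}. \<Sum>l\<in>{i,j}. cnj (v $ k) * \<rho> $$ (k,l) * v $ l)"
proof -
  have "(\<Sum>k<n. \<Sum>l<n. cnj (v $ k) * \<rho> $$ (k,l) * v $ l)
      = (\<Sum>k<n. \<Sum>l\<in>{i,j}. cnj (v $ k) * \<rho> $$ (k,l) * v $ l)"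
    using assms by (intro sum.cong refl sum.mono_neutral_right) auto
  also have "\<dots> = (\<Sum>k\<in>{i,j}. \<Sum>l\<in>{i,j}. cnj (v $ k) * \<rho> $$ (k,l) * v $ l)"
    using assms by (intro sum.mono_neutral_right) auto
  finally show ?thesis .
qed

text \<open>A positive semidefinite matrix with a vanishing diagonal entry vanishes in that column:
test positivity on \<open>e\<^sub>i - t \<rho>(j,i) e\<^sub>j\<close> for large real \<open>t\<close>.\<close>

lemma psd_diag_zero_imp_col_zero:
  fixes \<rho> :: "complex mat"
  assumes herm: "\<forall>i<n. \<forall>j<n. \<rho> $$ (j,i) = cnj (\<rho> $$ (i,j))"
    and psd: "\<forall>v :: complex vec. dim_vec v = n \<longrightarrow>
                0 \<le> Re (\<Sum>i<n. \<Sum>j<n. cnj (v $ i) * \<rho> $$ (i,j) * v $ j)"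
    and ij: "i < n" "j < n" and diag: "\<rho> $$ (j,j) = 0"
  shows "\<rho> $$ (i,j) = 0"
proof (rule ccontr)
  assume "\<rho> $$ (i,j) \<noteq> 0"
  define r where "r = \<rho> $$ (i,j)"
  define t where "t = (\<bar>Re (\<rho> $$ (i,i))\<bar> + 1) / (2 * (cmod r)\<^sup>2)"
  define x where "x = - complex_of_real t * cnj r"
  define v where "v = vec n (\<lambda>k. if k = i then 1 else if k = j then x else 0)"
  have "i \<noteq> j"
    using \<open>\<rho> $$ (i,j) \<noteq> 0\<close> diag by auto
  have "r * cnj r = complex_of_real ((cmod r)\<^sup>2)"
    using complex_norm_square[of r] by (simp del: of_real_power)
  then have "r * x + cnj x * cnj r = - complex_of_real (2 * t * (cmod r)\<^sup>2)"
    by (simp add: x_def algebra_simps)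
  also have "2 * t * (cmod r)\<^sup>2 = \<bar>Re (\<rho> $$ (i,i))\<bar> + 1"
    using \<open>\<rho> $$ (i,j) \<noteq> 0\<close> by (simp add: t_def r_def)
  finally have cross: "r * x + cnj x * cnj r = - complex_of_real (\<bar>Re (\<rho> $$ (i,i))\<bar> + 1)" .
  have quad: "(\<Sum>k<n. \<Sum>l<n. cnj (v $ k) * \<rho> $$ (k,l) * v $ l)
      = \<rho> $$ (i,i) + (r * x + cnj x * cnj r)"
  proof -
    have v: "v $ i = 1" "v $ j = x" "\<And>l. l < n \<Longrightarrow> l \<noteq> i \<Longrightarrow> l \<noteq> j \<Longrightarrow> v $ l = 0"
      using ij \<open>i \<noteq> j\<close> by (simp_all add: v_def)
    have "\<rho> $$ (j,i) = cnj r"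
      using herm ij unfolding r_def by blast
    have "(\<Sum>k<n. \<Sum>l<n. cnj (v $ k) * \<rho> $$ (k,l) * v $ l)
        = (\<Sum>k\<in>{i,j}. \<Sum>l\<in>{i,j}. cnj (v $ k) * \<rho> $$ (k,l) * v $ l)"
      using ij \<open>i \<noteq> j\<close> v(3) by (rule quadratic_form_two_support)
    also have "\<dots> = cnj (v $ i) * \<rho> $$ (i,i) * v $ i + cnj (v $ i) * \<rho> $$ (i,j) * v $ j
        + (cnj (v $ j) * \<rho> $$ (j,i) * v $ i + cnj (v $ j) * \<rho> $$ (j,j) * v $ j)"
      using \<open>i \<noteq> j\<close> by simp
    also have "\<dots> = \<rho> $$ (i,i) + (r * x + cnj x * cnj r)"
      using v \<open>\<rho> $$ (j,i) = cnj r\<close> diag by (simp add: r_def)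
    finally show ?thesis .
  qed
  have "0 \<le> Re (\<Sum>k<n. \<Sum>l<n. cnj (v $ k) * \<rho> $$ (k,l) * v $ l)"
    using psd by (simp only: v_def dim_vec)
  also have "\<dots> = Re (\<rho> $$ (i,i)) - (\<bar>Re (\<rho> $$ (i,i))\<bar> + 1)"
    by (simp only: quad cross plus_complex.sel uminus_complex.sel Re_complex_of_real diff_conv_add_uminus)
  finally show False
    by linarith
qed

lemma state_diag_zero_imp_col_zero:
  assumes "is_state n \<rho>" "i < n" "j < n" "\<rho> $$ (j,j) = 0"
  shows "\<rho> $$ (i,j) = 0"
  using assms psd_diag_zero_imp_col_zero[of n \<rho> i j] unfolding is_state_def by blast

lemma pair_index_less_square:
  fixes a b d :: nat
  assumes "a < d" "b < d"
  shows "a * d + b < d * d"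
proof -
  have "a * d + b < (a + 1) * d"
    using assms(2) by simp
  also have "\<dots> \<le> d * d"
    using assms(1) by (intro mult_le_mono1) simp
  finally show ?thesis .
qed

lemma mem_modes_kron_iff:
  assumes A: "A \<in> carrier_mat d d" and B: "B \<in> carrier_mat d d"
  shows "j \<in> modes d (kron A B) \<longleftrightarrow>
    (\<exists>a<d. \<exists>b<d. \<exists>a'<d. \<exists>b'<d. a + b = a' + b' + j \<and> A $$ (a,a') * B $$ (b,b') \<noteq> 0)"
    (is "_ \<longleftrightarrow> ?pairs")
proof -
  have carrier: "kron A B \<in> carrier_mat (d*d) (d*d)"
    using A B by (simp add: kron_def)
  show ?thesis
  proof
    assume "j \<in> modes d (kron A B)"
    then obtain i k where "i < d*d" "k < d*d" "LAB_value d i = LAB_value d k + j"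
      "A $$ (i div d, k div d) * B $$ (i mod d, k mod d) \<noteq> 0"
      using carrier by (auto simp: mem_modes_iff index_kron[OF A B])
    then show ?pairs
      using div_mod_less_square[of i d] div_mod_less_square[of k d] unfolding LAB_value_def by blast
  next
    assume ?pairs
    then obtain a b a' b' where "a < d" "b < d" "a' < d" "b' < d" "a + b = a' + b' + j"
      "A $$ (a,a') * B $$ (b,b') \<noteq> 0"
      by blast
    moreover have "(a * d + b) div d = a" "(a * d + b) mod d = b"
      "(a' * d + b') div d = a'" "(a' * d + b') mod d = b'"
      using \<open>b < d\<close> \<open>b' < d\<close> by simp_all
    ultimately have "a * d + b < d*d \<and> a' * d + b' < d*d
        \<and> LAB_value d (a * d + b) = LAB_value d (a' * d + b') + j
        \<and> kron A B $$ (a * d + b, a' * d + b') \<noteq> 0"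
      using pair_index_less_square by (simp add: index_kron[OF A B] LAB_value_def)
    then show "j \<in> modes d (kron A B)"
      unfolding mem_modes_iff[OF carrier] by blast
  qed
qed

lemma kron_large_mode_imp_small_mode:
  assumes A: "A \<in> carrier_mat d d" and B: "is_state d B"
    and j: "j \<in> modes d (kron A B)" "d \<le> j"
  obtains j' where "j' \<in> modes d (kron A B)" "1 \<le> j'" "j' \<le> d - 1"
proof -
  note modes_iff = mem_modes_kron_iff[OF A state_carrier_mat[OF B]]
  obtain a b a' b' where "a < d" "b < d" "a' < d" "b' < d" "a + b = a' + b' + j"
    and "A $$ (a,a') \<noteq> 0" "B $$ (b,b') \<noteq> 0"
    using j(1) unfolding modes_iff by auto
  then have "a' < a" "b' < b"
    using j(2) by linarith+
  have "B $$ (b',b') \<noteq> 0"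
    using state_diag_zero_imp_col_zero[OF B \<open>b < d\<close> \<open>b' < d\<close>] \<open>B $$ (b,b') \<noteq> 0\<close> by blast
  then have "a < d \<and> b' < d \<and> a' < d \<and> b' < d \<and> a + b' = a' + b' + (a - a')
      \<and> A $$ (a,a') * B $$ (b',b') \<noteq> 0"
    using \<open>a < d\<close> \<open>a' < d\<close> \<open>b' < d\<close> \<open>a' < a\<close> \<open>A $$ (a,a') \<noteq> 0\<close> by simp
  then have "a - a' \<in> modes d (kron A B)"
    unfolding modes_iff by blast
  moreover have "1 \<le> a - a'" "a - a' \<le> d - 1"
    using \<open>a' < a\<close> \<open>a < d\<close> by auto
  ultimately show ?thesis
    using that by blast
qed

theorem lemma4:
  fixes d :: nat and \<rho> :: "complex mat"
  assumes "is_state (d*d) \<rho>"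
    and "modes d \<rho> \<noteq> {0}"
    and "\<forall>j. 1 \<le> j \<and> j \<le> d - 1 \<longrightarrow> j \<notin> modes d \<rho>"
  shows "\<not> is_product_state d \<rho>"
proof
  assume "is_product_state d \<rho>"
  then obtain A B where "is_state d A" "is_state d B" "\<rho> = kron A B"
    unfolding is_product_state_def by blast
  obtain j where "j \<in> modes d \<rho>" "j \<noteq> 0"
    using assms(2) state_zero_mem_modes[OF assms(1)] by blast
  then have "\<not> (1 \<le> j \<and> j \<le> d - 1)"
    using assms(3) by blast
  then have "d \<le> j"
    using \<open>j \<noteq> 0\<close> by linarith
  then obtain j' where "j' \<in> modes d \<rho>" "1 \<le> j'" "j' \<le> d - 1"
    using kron_large_mode_imp_small_mode state_carrier_mat \<open>j \<in> modes d \<rho>\<close> \<open>is_state d A\<close>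
      \<open>is_state d B\<close> \<open>\<rho> = kron A B\<close> by blast
  then show False
    using assms(3) by blast
qed

end
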